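(* For every integer $k\ge 2$ and every finite simple undirected graph $G$ on $n\ge k$ vertices, \[ \lambda_k(G)\ \le\ \frac{\lambda_{\mathbb R}(k-1)}{2(k-1)}\,n-1 . \] Consequently $c_k\le \dfrac{\lambda_{\mathbb R}(k-1)}{2(k-1)}$.
   Context: For a graph $G$ on $n$ vertices, $\lambda_1(G)\ge\cdots\ge\lambda_n(G)$ are the eigenvalues of its adjacency matrix. For $k\ge1$, $M_k(n)=\max\{\lambda_k(G): |V(G)|=n\}$ and $c_k=\sup_{n\ge k} M_k(n)/n$. For $N\ge r\ge1$, $\mathcal P_r(N)$ denotes the set of rank-$r$ orthogonal projections (symmetric idempotent matrices of rank $r$) in $\mathbb R^{N\times N}$, and \[ \lambda_{\mathbb R}(r)=\sup_{N\ge r}\frac1N\max_{Q\in\mathcal P_r(N)}\sum_{i,j=1}^N|q_{ij}|, \] where $Q=(q_{ij})$ (this equals the real maximal absolute projection constant of dimension $r$). *)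

theory Defs
  imports "Jordan_Normal_Form.DL_Rank" "Jordan_Normal_Form.Char_Poly"
begin

text \<open>Finite simple undirected graphs on the vertex set {0..<n}, given by a
  symmetric irreflexive edge relation (only its restriction to {0..<n} matters).\<close>
definition simple_graph :: "nat \<Rightarrow> (nat \<Rightarrow> nat \<Rightarrow> bool) \<Rightarrow> bool" where
  "simple_graph n E \<longleftrightarrow> (\<forall>i<n. \<forall>j<n. E i j = E j i) \<and> (\<forall>i<n. \<not> E i i)"

definition adj_mat :: "nat \<Rightarrow> (nat \<Rightarrow> nat \<Rightarrow> bool) \<Rightarrow> real mat" where
  "adj_mat n E = mat n n (\<lambda>(i, j). if E i j then 1 else 0)"

text \<open>Eigenvalues (with multiplicity) of a square real matrix whose characteristic
  polynomial splits over the reals (e.g. a symmetric one), listed in non-increasing order.\<close>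
definition eigs_desc :: "real mat \<Rightarrow> real list" where
  "eigs_desc A = (THE ls. length ls = dim_row A \<and> sorted (rev ls) \<and>
      char_poly A = (\<Prod>a\<leftarrow>ls. [:- a, 1:]))"

text \<open>lambda_k(G), 1-indexed: the k-th largest adjacency eigenvalue.\<close>
definition graph_eig :: "nat \<Rightarrow> nat \<Rightarrow> (nat \<Rightarrow> nat \<Rightarrow> bool) \<Rightarrow> real" where
  "graph_eig k n E = eigs_desc (adj_mat n E) ! (k - 1)"

definition M_k :: "nat \<Rightarrow> nat \<Rightarrow> real" where
  "M_k k n = Max {graph_eig k n E | E. simple_graph n E}"

definition c_k :: "nat \<Rightarrow> real" where
  "c_k k = (SUP n\<in>{k..}. M_k k n / real n)"

definition proj_set :: "nat \<Rightarrow> nat \<Rightarrow> real mat set" where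
  "proj_set r N = {Q \<in> carrier_mat N N. transpose_mat Q = Q \<and> Q * Q = Q \<and>
      vec_space.rank N Q = r}"

text \<open>lambda_R(r); the inner maximum is written as a supremum (it is attained,
  the set of rank-r projections being compact).\<close>
definition lambda_R :: "nat \<Rightarrow> real" where
  "lambda_R r = (SUP N\<in>{r..}. (1 / real N) *
      (SUP Q\<in>proj_set r N. (\<Sum>i<N. \<Sum>j<N. \<bar>Q $$ (i, j)\<bar>)))"

end

(* Let A be the adjacency matrix of G and u_1, ..., u_k orthonormal eigenvectors of A for its
   k largest eigenvalues, all of which are at least lambda_k.  Removing from the orthogonal
   projection onto their span the direction z of the projection of the all-ones vector gives an
   orthogonal projection Q of rank k - 1 with Q 1 = 0 and <Q, A> >= (k - 1) lambda_k.  As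
   2A + 2I - J has all entries in {-1, 1}, <Q, J> = 0 and <Q, I> = tr Q = k - 1,
     sum |q_ij| >= <Q, 2A + 2I - J> >= 2 (k - 1) (lambda_k + 1),
   while sum |q_ij| <= n lambda_R(k - 1) by the definition of the projection constant. *)

theory Submission
  imports Defs "Jordan_Normal_Form.Schur_Decomposition" "Berlekamp_Zassenhaus.Mahler_Measure"
begin

section \<open>Trace and eigenvalues\<close>

definition trace_mat :: "'a::comm_monoid_add mat \<Rightarrow> 'a" where
  "trace_mat A = (\<Sum>i<dim_row A. A $$ (i, i))"

lemma trace_mat_mult_comm:
  fixes A B :: "'a::comm_semiring_0 mat"
  assumes A: "A \<in> carrier_mat n m" and B: "B \<in> carrier_mat m n"
  shows "trace_mat (A * B) = trace_mat (B * A)"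
proof -
  have "trace_mat (A * B) = (\<Sum>i<n. \<Sum>j<m. A $$ (i, j) * B $$ (j, i))"
    using A B by (simp add: trace_mat_def scalar_prod_def atLeast0LessThan)
  also have "\<dots> = (\<Sum>j<m. \<Sum>i<n. B $$ (j, i) * A $$ (i, j))"
    by (subst sum.swap) (simp add: mult.commute)
  also have "\<dots> = trace_mat (B * A)"
    using A B by (simp add: trace_mat_def scalar_prod_def atLeast0LessThan)
  finally show ?thesis .
qed

lemma trace_mat_eq_sum_eigenvalues:
  fixes A :: "'a::conjugatable_ordered_field mat"
  assumes A: "A \<in> carrier_mat n n" and char: "char_poly A = (\<Prod>e\<leftarrow>es. [:- e, 1:])"
  shows "trace_mat A = sum_list es"
proof -
  obtain B P Q where schur: "schur_decomposition A es = (B, P, Q)"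
    by (cases "schur_decomposition A es") auto
  then have wit: "similar_mat_wit A B P Q" and diag: "diag_mat B = es"
    using schur_decomposition[OF A char] by auto
  from similar_mat_witD2[OF A wit]
  have B: "B \<in> carrier_mat n n" and P: "P \<in> carrier_mat n n" and Q: "Q \<in> carrier_mat n n"
    and QP: "Q * P = 1\<^sub>m n" and APBQ: "A = P * B * Q"
    by auto
  have "trace_mat A = trace_mat (P * (B * Q))"
    using APBQ P B Q by simp
  also have "\<dots> = trace_mat (B * Q * P)"
    using trace_mat_mult_comm[OF P, of "B * Q"] B Q by simp
  also have "B * Q * P = B"
    using B Q P QP by simp
  also have "trace_mat B = sum_list (diag_mat B)"
    using B unfolding trace_mat_def diag_mat_def
    by (simp flip: sum_set_upt_conv_sum_list_nat add: atLeast0LessThan)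
  finally show ?thesis
    using diag by simp
qed

lemma symmetric_mat_scalar_prod:
  fixes A :: "'a::comm_semiring_0 mat"
  assumes A: "A \<in> carrier_mat n n" and sym: "transpose_mat A = A"
    and x: "x \<in> carrier_vec n" and y: "y \<in> carrier_vec n"
  shows "(A *\<^sub>v x) \<bullet> y = x \<bullet> (A *\<^sub>v y)"
  using transpose_vec_mult_scalar[OF A y x] sym by simp

lemma symmetric_mat_eigenvalue_real:
  fixes A :: "real mat" and a :: complex
  assumes A: "A \<in> carrier_mat n n" and sym: "transpose_mat A = A"
    and ev: "eigenvalue (of_real_hom.mat_hom A) a"
  shows "a \<in> \<real>"
proof -
  let ?C = "of_real_hom.mat_hom A :: complex mat"
  have entries_sym: "A $$ (j, i) = A $$ (i, j)" if "i < n" "j < n" for i j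
    using sym that A by (metis carrier_matD index_transpose_mat(1))
  have C: "?C \<in> carrier_mat n n" and symC: "transpose_mat ?C = ?C"
    using A entries_sym by (auto intro!: eq_matI)
  obtain v where v: "v \<in> carrier_vec n" "v \<noteq> 0\<^sub>v n" and Cv: "?C *\<^sub>v v = a \<cdot>\<^sub>v v"
    using ev C unfolding eigenvalue_def eigenvector_def by auto
  have real_C: "?C *\<^sub>v conjugate v = conjugate (?C *\<^sub>v v)"
  proof (rule eq_vecI)
    fix i assume "i < dim_vec (conjugate (?C *\<^sub>v v))"
    then have i: "i < n"
      using C by simp
    show "(?C *\<^sub>v conjugate v) $ i = conjugate (?C *\<^sub>v v) $ i"
      using i A v(1) by (simp add: scalar_prod_def cnj_sum)
  qed (use C in simp)
  have "a * (v \<bullet>c v) = (?C *\<^sub>v v) \<bullet> conjugate v"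
    using Cv v by simp
  also have "\<dots> = v \<bullet> (?C *\<^sub>v conjugate v)"
    by (rule symmetric_mat_scalar_prod[OF C symC v(1) carrier_vec_conjugate[OF v(1)]])
  also have "\<dots> = cnj a * (v \<bullet>c v)"
    using real_C Cv v by (simp add: conjugate_smult_vec)
  finally have "a = cnj a"
    using v by simp
  then show ?thesis
    by (metis Reals_cnj_iff)
qed

lemma char_poly_symmetric_splits:
  fixes A :: "real mat"
  assumes A: "A \<in> carrier_mat n n" and sym: "transpose_mat A = A"
  obtains es where "char_poly A = (\<Prod>e\<leftarrow>es. [:- e, 1:])"
proof -
  let ?C = "of_real_hom.mat_hom A :: complex mat"
  have C: "?C \<in> carrier_mat n n"
    using A by simp
  obtain as where as: "char_poly ?C = (\<Prod>a\<leftarrow>as. [:- a, 1:])"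
    using char_poly_factorized[OF C] by auto
  have real_roots: "of_real (Re a) = a" if "a \<in> set as" for a
  proof -
    have "poly (char_poly ?C) a = 0"
      using that unfolding as by (auto simp: poly_prod_list_zero_iff)
    then have "eigenvalue ?C a"
      using eigenvalue_root_char_poly[OF C] by simp
    then show ?thesis
      using symmetric_mat_eigenvalue_real[OF A sym] by (simp add: of_real_Re)
  qed
  interpret of_real_poly: map_poly_inj_idom_hom "of_real :: real \<Rightarrow> complex"
    by unfold_locales
  have "map_poly of_real (char_poly A) = char_poly ?C"
    by (rule of_real_hom.char_poly_hom[OF A, symmetric])
  also have "\<dots> = (\<Prod>a\<leftarrow>map (\<lambda>a. of_real (Re a)) as. [:- a, 1:])"
    unfolding as using real_roots by (simp add: map_idI)
  also have "\<dots> = map_poly of_real (\<Prod>a\<leftarrow>map Re as. [:- a, 1:])"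
    by (simp add: of_real_poly.hom_prod_list o_def)
  finally show ?thesis
    using of_real_poly.injectivity that by blast
qed

section \<open>Spectral theorem for real symmetric matrices\<close>

definition orthonormal :: "nat \<Rightarrow> real vec list \<Rightarrow> bool" where
  "orthonormal n vs \<longleftrightarrow> set vs \<subseteq> carrier_vec n \<and>
     (\<forall>i<length vs. \<forall>j<length vs. vs ! i \<bullet> vs ! j = (if i = j then 1 else 0))"

definition eigenpairs :: "real mat \<Rightarrow> real vec list \<Rightarrow> real list \<Rightarrow> bool" where
  "eigenpairs A vs ds \<longleftrightarrow> length ds = length vs \<and>
     (\<forall>i<length vs. A *\<^sub>v vs ! i = ds ! i \<cdot>\<^sub>v vs ! i)"

lemma orthonormal_snoc:
  assumes orth: "orthonormal n vs" and v: "v \<in> carrier_vec n" "v \<bullet> v = 1"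
    and perp: "\<forall>i<length vs. vs ! i \<bullet> v = 0"
  shows "orthonormal n (vs @ [v])"
proof -
  have "v \<bullet> vs ! i = 0" if i: "i < length vs" for i
  proof -
    have "vs ! i \<in> carrier_vec n"
      using orth i unfolding orthonormal_def by auto
    then show ?thesis
      using comm_scalar_prod[OF v(1)] perp i by simp
  qed
  then show ?thesis
    using orth v perp unfolding orthonormal_def by (auto simp: nth_append less_Suc_eq)
qed

definition outer_prod_sum :: "nat \<Rightarrow> real vec list \<Rightarrow> real list \<Rightarrow> real mat" where
  "outer_prod_sum n vs cs = mat n n (\<lambda>(r, c). \<Sum>i<length vs. cs ! i * (vs ! i $ r * vs ! i $ c))"

lemma dim_outer_prod_sum [simp]:
  "dim_row (outer_prod_sum n vs cs) = n" "dim_col (outer_prod_sum n vs cs) = n"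
  by (simp_all add: outer_prod_sum_def)

lemma outer_prod_sum_carrier: "outer_prod_sum n vs cs \<in> carrier_mat n n"
  by (simp add: carrier_matI)

lemma transpose_outer_prod_sum: "transpose_mat (outer_prod_sum n vs cs) = outer_prod_sum n vs cs"
  by (auto intro!: eq_matI simp: outer_prod_sum_def mult.commute)

lemma outer_prod_sum_mult_vec:
  assumes x: "x \<in> carrier_vec n" and r: "r < n"
  shows "(outer_prod_sum n vs cs *\<^sub>v x) $ r = (\<Sum>i<length vs. cs ! i * vs ! i $ r * (vs ! i \<bullet> x))"
proof -
  have "(outer_prod_sum n vs cs *\<^sub>v x) $ r =
      (\<Sum>c<n. \<Sum>i<length vs. cs ! i * vs ! i $ r * (vs ! i $ c * x $ c))"
    using x r by (simp add: outer_prod_sum_def scalar_prod_def atLeast0LessThan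
        sum_distrib_left sum_distrib_right mult_ac)
  also have "\<dots> = (\<Sum>i<length vs. cs ! i * vs ! i $ r * (vs ! i \<bullet> x))"
    using x by (subst sum.swap) (simp add: scalar_prod_def atLeast0LessThan sum_distrib_left)
  finally show ?thesis .
qed

lemma outer_prod_sum_mult_orthogonal:
  assumes x: "x \<in> carrier_vec n" and perp: "\<forall>i<length vs. vs ! i \<bullet> x = 0"
  shows "outer_prod_sum n vs cs *\<^sub>v x = 0\<^sub>v n"
proof (rule eq_vecI)
  fix r assume "r < dim_vec (0\<^sub>v n :: real vec)"
  then have "(outer_prod_sum n vs cs *\<^sub>v x) $ r = (\<Sum>i<length vs. cs ! i * vs ! i $ r * (vs ! i \<bullet> x))"
    using outer_prod_sum_mult_vec[OF x] by simp
  also have "\<dots> = 0"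
    using perp by simp
  finally show "(outer_prod_sum n vs cs *\<^sub>v x) $ r = 0\<^sub>v n $ r"
    using \<open>r < dim_vec (0\<^sub>v n)\<close> by simp
qed simp

lemma outer_prod_sum_mult_member:
  assumes orth: "orthonormal n vs" and j: "j < length vs"
  shows "outer_prod_sum n vs cs *\<^sub>v vs ! j = cs ! j \<cdot>\<^sub>v vs ! j"
proof -
  have vj: "vs ! j \<in> carrier_vec n"
    using orth j unfolding orthonormal_def by auto
  have "(outer_prod_sum n vs cs *\<^sub>v vs ! j) $ r = cs ! j * vs ! j $ r" if r: "r < n" for r
  proof -
    have "(outer_prod_sum n vs cs *\<^sub>v vs ! j) $ r =
        (\<Sum>i<length vs. if i = j then cs ! j * vs ! j $ r else 0)"
      using orth j unfolding outer_prod_sum_mult_vec[OF vj r] orthonormal_def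
      by (intro sum.cong) auto
    then show ?thesis
      using j by simp
  qed
  then show ?thesis
    using vj by (intro eq_vecI) (auto simp: outer_prod_sum_carrier)
qed

lemma trace_outer_prod_sum:
  assumes orth: "orthonormal n vs"
  shows "trace_mat (outer_prod_sum n vs cs) = (\<Sum>i<length vs. cs ! i)"
proof -
  have vs: "vs ! i \<in> carrier_vec n" "vs ! i \<bullet> vs ! i = 1" if "i < length vs" for i
    using orth that unfolding orthonormal_def by auto
  have "trace_mat (outer_prod_sum n vs cs) = (\<Sum>r<n. \<Sum>i<length vs. cs ! i * (vs ! i $ r * vs ! i $ r))"
    by (simp add: trace_mat_def outer_prod_sum_def)
  also have "\<dots> = (\<Sum>i<length vs. cs ! i * (vs ! i \<bullet> vs ! i))"
  proof (subst sum.swap, intro sum.cong refl)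
    fix i assume "i \<in> {..<length vs}"
    then show "(\<Sum>r<n. cs ! i * (vs ! i $ r * vs ! i $ r)) = cs ! i * (vs ! i \<bullet> vs ! i)"
      using vs(1)[of i] by (simp add: scalar_prod_def atLeast0LessThan sum_distrib_left)
  qed
  also have "\<dots> = (\<Sum>i<length vs. cs ! i)"
    using vs(2) by simp
  finally show ?thesis .
qed

lemma symmetric_mat_eigenvectors_orthogonal:
  fixes A :: "real mat"
  assumes A: "A \<in> carrier_mat n n" and sym: "transpose_mat A = A"
    and x: "x \<in> carrier_vec n" "A *\<^sub>v x = d \<cdot>\<^sub>v x"
    and y: "y \<in> carrier_vec n" "A *\<^sub>v y = e \<cdot>\<^sub>v y"
    and "d \<noteq> e"
  shows "x \<bullet> y = 0"
proof -
  have "d * (x \<bullet> y) = (A *\<^sub>v x) \<bullet> y"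
    using x y by simp
  also have "\<dots> = x \<bullet> (A *\<^sub>v y)"
    by (rule symmetric_mat_scalar_prod[OF A sym x(1) y(1)])
  also have "\<dots> = e * (x \<bullet> y)"
    using x y by simp
  finally show ?thesis
    using \<open>d \<noteq> e\<close> by simp
qed

lemma symmetric_mat_eigenvalue_ne:
  fixes A :: "real mat"
  assumes A: "A \<in> carrier_mat n n" and sym: "transpose_mat A = A" and "trace_mat A \<noteq> real n * t"
  obtains e x where "e \<noteq> t" "x \<in> carrier_vec n" "x \<noteq> 0\<^sub>v n" "A *\<^sub>v x = e \<cdot>\<^sub>v x"
proof -
  obtain es where es: "char_poly A = (\<Prod>e\<leftarrow>es. [:- e, 1:])"
    using char_poly_symmetric_splits[OF A sym] .
  moreover have "length es = n"
    using degree_monic_char_poly[OF A] es degree_linear_factors[of uminus es] by simp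
  ultimately obtain e where e: "e \<in> set es" "e \<noteq> t"
    using trace_mat_eq_sum_eigenvalues[OF A es] \<open>trace_mat A \<noteq> real n * t\<close>
    by (metis replicate_length_same sum_list_replicate mult_of_nat_commute)
  then have "eigenvalue A e"
    unfolding eigenvalue_root_char_poly[OF A] es by (auto simp: poly_prod_list_zero_iff)
  then show thesis
    using that e(2) A unfolding eigenvalue_def eigenvector_def by auto
qed

lemma symmetric_mat_orthogonal_eigenvector:
  fixes A :: "real mat"
  assumes A: "A \<in> carrier_mat n n" and sym: "transpose_mat A = A"
    and orth: "orthonormal n vs" and eig: "eigenpairs A vs ds" and less: "length vs < n"
  obtains v d where "v \<in> carrier_vec n" "v \<bullet> v = 1" "\<forall>i<length vs. vs ! i \<bullet> v = 0"
    "A *\<^sub>v v = d \<cdot>\<^sub>v v"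
proof -
  define m where "m = length vs"
  have vs: "vs ! j \<in> carrier_vec n" "A *\<^sub>v vs ! j = ds ! j \<cdot>\<^sub>v vs ! j" if "j < m" for j
    using orth eig that unfolding orthonormal_def eigenpairs_def m_def by auto
  have len_ds: "length ds = m"
    using eig unfolding eigenpairs_def m_def by simp
  \<comment> \<open>Move the known eigenvalues to a common value t, chosen so that trace B \<noteq> n t; then B has
    an eigenvalue e \<noteq> t, and its eigenvectors are orthogonal to vs and are eigenvectors of A.\<close>
  define t where "t = (trace_mat A - sum_list ds) / (real n - real m) + 1"
  define K where "K = outer_prod_sum n vs (map (\<lambda>d. t - d) ds)"
  define B where "B = A + K"
  have K: "K \<in> carrier_mat n n" and B: "B \<in> carrier_mat n n"
    using A by (simp_all add: K_def B_def outer_prod_sum_carrier)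
  have symB: "transpose_mat B = B"
    using A sym by (simp add: B_def K_def transpose_add outer_prod_sum_carrier transpose_outer_prod_sum)
  have B_vs: "B *\<^sub>v vs ! j = t \<cdot>\<^sub>v vs ! j" if j: "j < m" for j
  proof -
    have "B *\<^sub>v vs ! j = ds ! j \<cdot>\<^sub>v vs ! j + (t - ds ! j) \<cdot>\<^sub>v vs ! j"
      using A K vs[OF j] j len_ds outer_prod_sum_mult_member[OF orth, of j]
      by (simp add: B_def K_def m_def add_mult_distrib_mat_vec)
    then show ?thesis
      by (simp add: add_smult_distrib_vec[symmetric])
  qed
  have "trace_mat B = trace_mat A + (\<Sum>i<m. t - ds ! i)"
    using A K trace_outer_prod_sum[OF orth] len_ds
    by (simp add: B_def K_def m_def trace_mat_def sum.distrib)
  also have "\<dots> = trace_mat A + real m * t - sum_list ds"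
    using len_ds by (simp add: sum_subtractf sum_list_sum_nth atLeast0LessThan)
  finally have trace_B: "trace_mat B = trace_mat A + real m * t - sum_list ds" .
  have gap: "real n - real m > 0"
    using less by (simp add: m_def)
  then have "(real n - real m) * (t - 1) = trace_mat A - sum_list ds"
    unfolding t_def by simp
  then have "trace_mat B \<noteq> real n * t"
    using trace_B gap by (simp add: algebra_simps)
  then obtain e x where e: "e \<noteq> t" and x: "x \<in> carrier_vec n" "x \<noteq> 0\<^sub>v n"
    and Bx: "B *\<^sub>v x = e \<cdot>\<^sub>v x"
    by (rule symmetric_mat_eigenvalue_ne[OF B symB])
  have perp: "\<forall>i<length vs. vs ! i \<bullet> x = 0"
    using symmetric_mat_eigenvectors_orthogonal[OF B symB _ B_vs _ Bx] vs(1) x(1) e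
    unfolding m_def by auto
  have Ax: "A *\<^sub>v x = e \<cdot>\<^sub>v x"
    using Bx A K x(1) outer_prod_sum_mult_orthogonal[OF x(1) perp]
    by (simp add: B_def K_def add_mult_distrib_mat_vec)
  have xx: "x \<bullet> x > 0"
    using x conjugate_square_greater_0_vec[OF x(1)] by simp
  define v where "v = (1 / sqrt (x \<bullet> x)) \<cdot>\<^sub>v x"
  show thesis
  proof (rule that)
    show "v \<in> carrier_vec n" and "v \<bullet> v = 1"
      using x(1) xx by (simp_all add: v_def)
    show "\<forall>i<length vs. vs ! i \<bullet> v = 0"
      using perp vs(1) x(1) by (simp add: v_def m_def)
    show "A *\<^sub>v v = e \<cdot>\<^sub>v v"
      using Ax A x(1) by (simp add: v_def mult_mat_vec smult_smult_assoc mult.commute)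
  qed
qed

lemma symmetric_mat_orthonormal_eigenvectors:
  fixes A :: "real mat"
  assumes A: "A \<in> carrier_mat n n" and sym: "transpose_mat A = A" and "m \<le> n"
  shows "\<exists>vs ds. length vs = m \<and> orthonormal n vs \<and> eigenpairs A vs ds"
  using \<open>m \<le> n\<close>
proof (induction m)
  case 0
  show ?case
    by (auto simp: orthonormal_def eigenpairs_def)
next
  case (Suc m)
  then obtain vs ds where len: "length vs = m" and orth: "orthonormal n vs" and eig: "eigenpairs A vs ds"
    by auto
  obtain v d where v: "v \<in> carrier_vec n" "v \<bullet> v = 1" "\<forall>i<length vs. vs ! i \<bullet> v = 0"
    and Av: "A *\<^sub>v v = d \<cdot>\<^sub>v v"
    using symmetric_mat_orthogonal_eigenvector[OF A sym orth eig] len Suc.prems by auto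
  have "orthonormal n (vs @ [v])"
    using orthonormal_snoc[OF orth v] .
  moreover have "eigenpairs A (vs @ [v]) (ds @ [d])"
    using eig Av unfolding eigenpairs_def by (auto simp: nth_append less_Suc_eq)
  ultimately show ?case
    using len by (metis length_append_singleton)
qed

lemma orthonormal_mat_of_cols_inverse:
  assumes orth: "orthonormal n vs" and len: "length vs = n"
  shows "transpose_mat (mat_of_cols n vs) * mat_of_cols n vs = 1\<^sub>m n"
    and "mat_of_cols n vs * transpose_mat (mat_of_cols n vs) = 1\<^sub>m n"
proof -
  let ?V = "mat_of_cols n vs"
  have V: "?V \<in> carrier_mat n n"
    using len by auto
  have "col ?V j = vs ! j" if "j < n" for j
    using orth len that unfolding orthonormal_def by (intro col_mat_of_cols) auto
  then have "col ?V i \<bullet> col ?V j = (if i = j then 1 else 0)" if "i < n" "j < n" for i j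
    using orth len that unfolding orthonormal_def by auto
  then show VTV: "transpose_mat ?V * ?V = 1\<^sub>m n"
    using V by (intro eq_matI) auto
  show "?V * transpose_mat ?V = 1\<^sub>m n"
    using mat_mult_left_right_inverse[OF _ V VTV] V by simp
qed

lemma eigenpairs_mat_of_cols:
  assumes A: "A \<in> carrier_mat n n" and orth: "orthonormal n vs" and eig: "eigenpairs A vs ds"
    and len: "length vs = n"
  shows "A * mat_of_cols n vs = mat_of_cols n vs * mat_diag n (\<lambda>i. ds ! i)"
    (is "A * ?V = ?V * ?D")
proof (rule eq_matI)
  have vs: "vs ! j \<in> carrier_vec n" "A *\<^sub>v vs ! j = ds ! j \<cdot>\<^sub>v vs ! j" if "j < n" for j
    using orth eig len that unfolding orthonormal_def eigenpairs_def by auto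
  have V: "?V \<in> carrier_mat n n"
    using len by auto
  fix r j assume "r < dim_row (?V * ?D)" "j < dim_col (?V * ?D)"
  then have r: "r < n" and j: "j < n"
    by (auto simp: mat_diag_def)
  have "(A * ?V) $$ (r, j) = (A *\<^sub>v vs ! j) $ r"
    using A r j len vs(1)[OF j] by (simp add: col_mat_of_cols)
  also have "\<dots> = ?V $$ (r, j) * ds ! j"
    using vs[OF j] r j len by (simp add: mat_of_cols_def)
  also have "\<dots> = (?V * ?D) $$ (r, j)"
    using V r j by (simp add: mat_diag_mult_right)
  finally show "(A * ?V) $$ (r, j) = (?V * ?D) $$ (r, j)" .
qed (use A len in \<open>auto simp: mat_diag_def\<close>)

theorem symmetric_mat_spectral:
  fixes A :: "real mat"
  assumes A: "A \<in> carrier_mat n n" and sym: "transpose_mat A = A"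
  obtains vs ds where "length vs = n" "orthonormal n vs" "eigenpairs A vs ds"
    "char_poly A = (\<Prod>d\<leftarrow>ds. [:- d, 1:])"
proof -
  obtain vs ds where len: "length vs = n" and orth: "orthonormal n vs" and eig: "eigenpairs A vs ds"
    using symmetric_mat_orthonormal_eigenvectors[OF A sym order.refl] by blast
  define V where "V = mat_of_cols n vs"
  define D where "D = mat_diag n (\<lambda>i. ds ! i)"
  have V: "V \<in> carrier_mat n n" and D: "D \<in> carrier_mat n n"
    using len by (auto simp: V_def D_def)
  have VTV: "transpose_mat V * V = 1\<^sub>m n" and VVT: "V * transpose_mat V = 1\<^sub>m n"
    using orthonormal_mat_of_cols_inverse[OF orth len] by (simp_all add: V_def)
  have "A = A * (V * transpose_mat V)"
    using A VVT by simp
  also have "\<dots> = (A * V) * transpose_mat V"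
    using A V by simp
  also have "\<dots> = V * D * transpose_mat V"
    using eigenpairs_mat_of_cols[OF A orth eig len] by (simp add: V_def D_def)
  finally have "similar_mat_wit A D V (transpose_mat V)"
    unfolding similar_mat_wit_def Let_def using A D V VTV VVT by auto
  then have "similar_mat A D"
    unfolding similar_mat_def by blast
  then have "char_poly A = char_poly D"
    by (rule char_poly_similar)
  also have "\<dots> = (\<Prod>d\<leftarrow>diag_mat D. [:- d, 1:])"
    by (rule char_poly_upper_triangular[OF D]) (simp add: upper_triangular_def D_def mat_diag_def)
  also have "diag_mat D = ds"
    using eig len unfolding eigenpairs_def diag_mat_def D_def mat_diag_def
    by (intro nth_equalityI) auto
  finally show ?thesis
    using that len orth eig by blast
qed

lemma eigs_desc_eq_rev_sort:
  assumes A: "A \<in> carrier_mat n n" and char: "char_poly A = (\<Prod>d\<leftarrow>ds. [:- d, 1:])"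
  shows "eigs_desc A = rev (sort ds)"
  unfolding eigs_desc_def
proof (rule the_equality)
  have "length ds = n"
    using degree_monic_char_poly[OF A] char degree_linear_factors[of uminus ds] by simp
  moreover have "(\<Prod>a\<leftarrow>rev (sort ds). [:- a, 1:]) = (\<Prod>a\<leftarrow>ds. [:- a, 1:])"
    by (subst (1 2) prod_mset_prod_list[symmetric]) simp
  ultimately show "length (rev (sort ds)) = dim_row A \<and> sorted (rev (rev (sort ds))) \<and>
      char_poly A = (\<Prod>a\<leftarrow>rev (sort ds). [:- a, 1:])"
    using A char by simp
next
  fix ls assume ls: "length ls = dim_row A \<and> sorted (rev ls) \<and> char_poly A = (\<Prod>a\<leftarrow>ls. [:- a, 1:])"
  then have "mset ls = mset ds"
    using char by (intro reconstruct_poly_monic_defines_mset) simp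
  then have "sort ds = rev ls"
    using ls by (intro properties_for_sort) simp_all
  then show "ls = rev (sort ds)"
    by simp
qed

lemma card_ge_kth_largest:
  fixes ds :: "real list"
  assumes k: "1 \<le> k" "k \<le> length ds"
  shows "k \<le> card {j. j < length ds \<and> rev (sort ds) ! (k - 1) \<le> ds ! j}"
proof -
  define c where "c = rev (sort ds) ! (k - 1)"
  have "{..<k} \<subseteq> {i. i < length ds \<and> c \<le> rev (sort ds) ! i}"
  proof
    fix i assume "i \<in> {..<k}"
    then have "sort ds ! (length ds - k) \<le> sort ds ! (length ds - Suc i)"
      using k by (intro sorted_nth_mono) auto
    then show "i \<in> {i. i < length ds \<and> c \<le> rev (sort ds) ! i}"
      using \<open>i \<in> {..<k}\<close> k by (simp add: c_def rev_nth Suc_diff_Suc)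
  qed
  then have "card {..<k} \<le> card {i. i < length ds \<and> c \<le> rev (sort ds) ! i}"
    by (intro card_mono) auto
  then have "k \<le> card {i. i < length ds \<and> c \<le> rev (sort ds) ! i}"
    by simp
  also have "\<dots> = length (filter (\<lambda>x. c \<le> x) (rev (sort ds)))"
    using length_filter_conv_card[of "\<lambda>x. c \<le> x" "rev (sort ds)"]
    by (simp only: length_rev length_sort)
  also have "\<dots> = length (filter (\<lambda>x. c \<le> x) ds)"
  proof -
    have "mset (filter (\<lambda>x. c \<le> x) (rev (sort ds))) = mset (filter (\<lambda>x. c \<le> x) ds)"
      by (simp add: mset_filter)
    from arg_cong[OF this, of size] show ?thesis
      by (simp only: size_mset)
  qed
  also have "\<dots> = card {j. j < length ds \<and> c \<le> ds ! j}"
    by (simp add: length_filter_conv_card)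
  finally show ?thesis
    unfolding c_def .
qed

section \<open>Rank of idempotent matrices\<close>

lemma (in vec_space) maximal_indpt_subset_spans:
  assumes W: "W \<subseteq> carrier_vec n" and max: "maximal S (\<lambda>T. T \<subseteq> W \<and> lin_indpt T)"
  shows "W \<subseteq> span S"
proof
  fix w assume w: "w \<in> W"
  have SW: "S \<subseteq> W" and indpt: "lin_indpt S"
    using max unfolding maximal_def by auto
  then have S: "S \<subseteq> carrier_vec n"
    using W by blast
  show "w \<in> span S"
  proof (cases "w \<in> S")
    case True
    then show ?thesis
      using in_own_span[OF S] by blast
  next
    case False
    then have "lin_dep (S \<union> {w})"
      using max w SW unfolding maximal_def by blast
    then show ?thesis
      using lin_dep_iff_in_span[OF S indpt _ False] w W by blast
  qed
qed

lemma (in vec_space) rank_factorization: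
  assumes Q: "Q \<in> carrier_mat n nc"
  obtains C M where "C \<in> carrier_mat n (rank Q)" "M \<in> carrier_mat (rank Q) nc" "Q = C * M"
    "set (cols C) \<subseteq> set (cols Q)" "distinct (cols C)" "lin_indpt (set (cols C))"
proof -
  obtain S where max: "maximal S (\<lambda>T. T \<subseteq> set (cols Q) \<and> lin_indpt T)"
    using maximal_exists[of "\<lambda>T. T \<subseteq> set (cols Q) \<and> lin_indpt T" "card (set (cols Q))" "{}"]
    by (meson List.finite_set card_mono empty_iff empty_subsetI finite_lin_indpt2 rev_finite_subset)
  have SQ: "S \<subseteq> set (cols Q)" and indpt: "lin_indpt S"
    using max unfolding maximal_def by auto
  have colsQ: "set (cols Q) \<subseteq> carrier_vec n"
    using Q cols_dim by blast
  then have S: "S \<subseteq> carrier_vec n"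
    using SQ by blast
  obtain cs where cs: "distinct cs" "set cs = S"
    using finite_distinct_list[OF finite_subset[OF SQ List.finite_set]] by blast
  have rank: "rank Q = length cs"
    using rank_card_indpt[OF Q max] cs distinct_card by metis
  define C where "C = mat_of_cols n cs"
  have C: "C \<in> carrier_mat n (rank Q)" and cols_C: "cols C = cs"
    using cs S rank by (auto simp: C_def)
  have "\<exists>x. x \<in> carrier_vec (rank Q) \<and> col Q j = C *\<^sub>v x" if j: "j < nc" for j
  proof -
    have "col Q j \<in> set (cols Q)"
      using j Q by (metis cols_length cols_nth carrier_matD(2) nth_mem)
    then have "col Q j \<in> span S"
      using maximal_indpt_subset_spans[OF colsQ max] by blast
    then obtain a where "lincomb a S = col Q j"
      using finite_in_span[OF finite_subset[OF SQ List.finite_set] S] by blast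
    moreover have "C *\<^sub>v vec (rank Q) (\<lambda>i. a (col C i)) = lincomb a S"
      using mat_mult_eq_lincomb[OF C] cols_C cs by simp
    ultimately show ?thesis
      by (intro exI[of _ "vec (rank Q) (\<lambda>i. a (col C i))"]) auto
  qed
  then obtain x where x: "\<And>j. j < nc \<Longrightarrow> x j \<in> carrier_vec (rank Q) \<and> col Q j = C *\<^sub>v x j"
    by metis
  define M where "M = mat_of_cols (rank Q) (map x [0..<nc])"
  have M: "M \<in> carrier_mat (rank Q) nc"
    unfolding M_def using mat_of_cols_carrier(1)[of "rank Q" "map x [0..<nc]"] by simp
  have "Q = C * M"
  proof (rule mat_col_eqI)
    fix j assume "j < dim_col (C * M)"
    then have j: "j < nc"
      using M by simp
    then have "col M j = x j"
      using x[OF j] by (simp add: M_def col_mat_of_cols)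
    then show "col Q j = col (C * M) j"
      using col_mult2[OF C M j] x[OF j] by simp
  qed (use Q C M in auto)
  then show thesis
    using that C M SQ cols_C cs indpt by simp
qed

lemma (in vec_space) indpt_cols_mult_left_cancel:
  assumes C: "C \<in> carrier_mat n r" and distinct: "distinct (cols C)"
    and indpt: "lin_indpt (set (cols C))"
    and X: "X \<in> carrier_mat r m" and Y: "Y \<in> carrier_mat r m" and CXY: "C * X = C * Y"
  shows "X = Y"
proof (rule mat_col_eqI)
  fix l assume "l < dim_col Y"
  then have l: "l < m"
    using Y by simp
  define y where "y = col X l - col Y l"
  have y: "y \<in> carrier_vec r"
    using X Y l by (simp add: y_def)
  have CY: "col (C * Y) l \<in> carrier_vec n"
    using C Y by (metis col_dim carrier_matD(1) index_mult_mat(2))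
  have "C *\<^sub>v y = C *\<^sub>v col X l - C *\<^sub>v col Y l"
    using C X Y l by (simp add: y_def mult_minus_distrib_mat_vec)
  also have "\<dots> = col (C * X) l - col (C * Y) l"
    by (simp only: col_mult2[OF C X l] col_mult2[OF C Y l])
  also have "\<dots> = 0\<^sub>v n"
    unfolding CXY using CY by (rule minus_cancel_vec)
  finally have "C *\<^sub>v y = 0\<^sub>v n" .
  then have "y = 0\<^sub>v r"
    using lin_depI[OF C y _ _ distinct] indpt by blast
  show "col X l = col Y l"
  proof (rule eq_vecI)
    fix i assume i: "i < dim_vec (col Y l)"
    have "y $ i = 0"
      using \<open>y = 0\<^sub>v r\<close> i Y by simp
    then show "col X l $ i = col Y l $ i"
      using i X Y l by (simp add: y_def)
  qed (use X Y in simp)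
qed (use X Y in auto)

lemma idempotent_rank_eq_trace:
  fixes Q :: "'a::field mat"
  assumes Q: "Q \<in> carrier_mat n n" and idem: "Q * Q = Q"
  shows "of_nat (vec_space.rank n Q) = trace_mat Q"
proof -
  interpret vec_space "TYPE('a)" n .
  obtain C M where C: "C \<in> carrier_mat n (rank Q)" and M: "M \<in> carrier_mat (rank Q) n"
    and QCM: "Q = C * M" and cols_C: "set (cols C) \<subseteq> set (cols Q)"
    and distinct: "distinct (cols C)" and indpt: "lin_indpt (set (cols C))"
    using rank_factorization[OF Q] by blast
  \<comment> \<open>The columns of C are columns of Q, hence fixed by Q; then C (M C) = C forces M C = 1.\<close>
  have QC: "Q * C = C"
  proof (rule mat_col_eqI)
    fix l assume l: "l < dim_col C"
    then have "col C l \<in> set (cols Q)"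
      using cols_C by (auto simp: cols_def)
    then obtain p where p: "p < n" "col C l = col Q p"
      using Q by (auto simp: cols_def)
    have "col (Q * C) l = Q *\<^sub>v col C l"
      using C l by (intro col_mult2[OF Q C]) simp
    also have "\<dots> = col (Q * Q) p"
      using col_mult2[OF Q Q p(1)] p(2) by simp
    also have "\<dots> = col C l"
      using idem p(2) by simp
    finally show "col (Q * C) l = col C l" .
  qed (use Q C in auto)
  have "C * (M * C) = C * 1\<^sub>m (rank Q)"
    using C M QC QCM by (simp flip: assoc_mult_mat)
  then have MC: "M * C = 1\<^sub>m (rank Q)"
    using C M by (intro indpt_cols_mult_left_cancel[OF C distinct indpt _ one_carrier_mat]) auto
  have "trace_mat Q = trace_mat (M * C)"
    using QCM trace_mat_mult_comm[OF C M] by simp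
  then show ?thesis
    by (simp add: MC trace_mat_def)
qed

section \<open>The projection constant\<close>

lemma proj_set_nonempty:
  assumes "r \<le> N"
  shows "proj_set r N \<noteq> {}"
proof -
  let ?Q = "mat_diag N (\<lambda>i. if i < r then 1 else 0) :: real mat"
  have sym: "transpose_mat ?Q = ?Q"
    unfolding mat_diag_def by (rule eq_matI) auto
  have idem: "?Q * ?Q = ?Q"
    unfolding mat_diag_diag by (rule arg_cong[where f = "mat_diag N"]) auto
  have "trace_mat ?Q = (\<Sum>i<N. if i < r then 1 else 0)"
    by (simp add: trace_mat_def mat_diag_def)
  also have "\<dots> = (\<Sum>i<r. 1)"
    using assms by (intro sum.mono_neutral_cong_right) auto
  finally have "vec_space.rank N ?Q = r"
    using idempotent_rank_eq_trace[OF mat_diag_dim idem] by simp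
  then have "?Q \<in> proj_set r N"
    using sym idem by (simp add: proj_set_def)
  then show ?thesis
    by blast
qed

lemma proj_set_sum_squares:
  assumes Q: "Q \<in> proj_set r N"
  shows "(\<Sum>i<N. \<Sum>j<N. (Q $$ (i, j))\<^sup>2) = real r"
proof -
  have Q_carrier: "Q \<in> carrier_mat N N" and sym: "transpose_mat Q = Q" and idem: "Q * Q = Q"
    and rank: "vec_space.rank N Q = r"
    using Q unfolding proj_set_def by auto
  have entries_sym: "Q $$ (i, j) = Q $$ (j, i)" if "i < N" "j < N" for i j
    using index_transpose_mat(1)[of j Q i] sym Q_carrier that by simp
  have "Q $$ (j, j) = (\<Sum>i<N. (Q $$ (i, j))\<^sup>2)" if j: "j < N" for j
  proof -
    have "Q $$ (j, j) = (\<Sum>i<N. Q $$ (j, i) * Q $$ (i, j))"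
      using arg_cong[OF idem, of "\<lambda>A. A $$ (j, j)"] Q_carrier j
      by (simp add: scalar_prod_def atLeast0LessThan)
    also have "\<dots> = (\<Sum>i<N. (Q $$ (i, j))\<^sup>2)"
      using j entries_sym by (simp add: power2_eq_square)
    finally show ?thesis .
  qed
  then have "(\<Sum>j<N. \<Sum>i<N. (Q $$ (i, j))\<^sup>2) = trace_mat Q"
    using Q_carrier by (simp add: trace_mat_def)
  also have "\<dots> = real r"
    using idempotent_rank_eq_trace[OF Q_carrier idem] rank by simp
  finally show ?thesis
    by (subst sum.swap)
qed

text \<open>Only needed to know that the suprema defining lambda_R are finite.\<close>
lemma proj_set_abs_sum_le:
  assumes Q: "Q \<in> proj_set r N"
  shows "(\<Sum>i<N. \<Sum>j<N. \<bar>Q $$ (i, j)\<bar>) \<le> real N * (1 + real r) / 2"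
proof (cases "N = 0")
  case False
  then have N: "real N > 0"
    by simp
  have am_gm: "\<bar>x\<bar> \<le> (1 / real N + real N * x\<^sup>2) / 2" for x :: real
  proof -
    have "0 \<le> (real N * \<bar>x\<bar> - 1)\<^sup>2"
      by simp
    then have "2 * real N * \<bar>x\<bar> \<le> 1 + (real N)\<^sup>2 * x\<^sup>2"
      by (simp add: power2_eq_square algebra_simps)
    then show ?thesis
      using N by (simp add: field_simps power2_eq_square)
  qed
  have "(\<Sum>i<N. \<Sum>j<N. \<bar>Q $$ (i, j)\<bar>)
      \<le> (\<Sum>i<N. \<Sum>j<N. (1 / real N + real N * (Q $$ (i, j))\<^sup>2) / 2)"
    by (intro sum_mono am_gm)
  also have "\<dots> = (real N + real N * (\<Sum>i<N. \<Sum>j<N. (Q $$ (i, j))\<^sup>2)) / 2"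
    using N by (simp add: sum.distrib sum_divide_distrib sum_distrib_left add_divide_distrib)
  finally show ?thesis
    using proj_set_sum_squares[OF Q] by (simp add: algebra_simps)
qed simp

lemma abs_sum_le_lambda_R:
  assumes Q: "Q \<in> proj_set r N" and "r \<le> N"
  shows "(\<Sum>i<N. \<Sum>j<N. \<bar>Q $$ (i, j)\<bar>) \<le> real N * lambda_R r"
proof -
  define abs_sum :: "nat \<Rightarrow> real mat \<Rightarrow> real"
    where "abs_sum N' Q' = (\<Sum>i<N'. \<Sum>j<N'. \<bar>Q' $$ (i, j)\<bar>)" for N' Q'
  define f where "f N' = 1 / real N' * (SUP Q'\<in>proj_set r N'. abs_sum N' Q')" for N'
  have bdd: "bdd_above (abs_sum N' ` proj_set r N')" for N'
    using proj_set_abs_sum_le unfolding abs_sum_def by (intro bdd_aboveI2)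
  have "f N' \<le> (1 + real r) / 2" if "N' \<in> {r..}" for N'
  proof -
    have "(SUP Q'\<in>proj_set r N'. abs_sum N' Q') \<le> real N' * (1 + real r) / 2"
      using proj_set_nonempty that proj_set_abs_sum_le unfolding abs_sum_def
      by (intro cSUP_least) auto
    then have "f N' \<le> 1 / real N' * (real N' * (1 + real r) / 2)"
      unfolding f_def by (intro mult_left_mono) auto
    then show ?thesis
      by (cases "N' = 0") auto
  qed
  then have "bdd_above (f ` {r..})"
    by (intro bdd_aboveI2)
  then have f_le: "f N \<le> lambda_R r"
    unfolding lambda_R_def f_def abs_sum_def using \<open>r \<le> N\<close> by (intro cSUP_upper) auto
  have abs_sum_le: "abs_sum N Q \<le> (SUP Q'\<in>proj_set r N. abs_sum N Q')"
    by (rule cSUP_upper[OF Q bdd])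
  show ?thesis
  proof (cases "N = 0")
    case False
    have "abs_sum N Q \<le> real N * f N"
      using abs_sum_le False by (simp add: f_def)
    also have "\<dots> \<le> real N * lambda_R r"
      using f_le by (intro mult_left_mono) auto
    finally show ?thesis
      unfolding abs_sum_def .
  qed simp
qed

section \<open>Projections built from orthonormal eigenvectors\<close>

locale orthonormal_family =
  fixes n :: nat and J :: "nat set" and u :: "nat \<Rightarrow> nat \<Rightarrow> real"
  assumes finite_J: "finite J"
    and orthonormal: "\<And>j l. j \<in> J \<Longrightarrow> l \<in> J \<Longrightarrow> (\<Sum>r<n. u j r * u l r) = (if j = l then 1 else 0)"
begin

definition combination :: "(nat \<Rightarrow> real) \<Rightarrow> nat \<Rightarrow> real" where
  "combination a r = (\<Sum>j\<in>J. a j * u j r)"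

lemma inner_combination: "(\<Sum>t<n. combination x t * combination y t) = (\<Sum>j\<in>J. x j * y j)"
proof -
  have "(\<Sum>t<n. combination x t * combination y t)
      = (\<Sum>t<n. \<Sum>j\<in>J. \<Sum>l\<in>J. x j * y l * (u j t * u l t))"
    unfolding combination_def sum_product by (intro sum.cong refl) (simp add: mult_ac)
  also have "\<dots> = (\<Sum>j\<in>J. \<Sum>l\<in>J. x j * y l * (\<Sum>t<n. u j t * u l t))"
    by (subst sum.swap) (simp add: sum.swap[of _ "{..<n}"] sum_distrib_left)
  also have "\<dots> = (\<Sum>j\<in>J. x j * y j)"
    using finite_J by (simp add: orthonormal if_distrib cong: if_cong)
  finally show ?thesis .
qed

text \<open>For a unit coefficient vector a, this is the orthogonal projection onto the span of the
  family with the direction of z = combination a removed.\<close>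
definition deflated_proj :: "(nat \<Rightarrow> real) \<Rightarrow> real mat" where
  "deflated_proj a = mat n n (\<lambda>(r, t). combination (\<lambda>j. u j r) t - combination a r * combination a t)"

lemma deflated_proj_idem:
  assumes unit: "(\<Sum>j\<in>J. (a j)\<^sup>2) = 1"
  shows "deflated_proj a * deflated_proj a = deflated_proj a"
proof -
  let ?P = "\<lambda>r t. combination (\<lambda>j. u j r) t" and ?z = "combination a" and ?Q = "deflated_proj a"
  have P_sym: "?P r t = ?P t r" for r t
    by (simp add: combination_def mult.commute)
  have PP: "(\<Sum>t<n. ?P r t * ?P s t) = ?P r s" for r s
    by (simp only: inner_combination) (simp add: combination_def)
  have Pz: "(\<Sum>t<n. ?P r t * ?z t) = ?z r" for r
    by (simp only: inner_combination) (simp add: combination_def mult.commute)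
  have zz: "(\<Sum>t<n. ?z t * ?z t) = 1"
    using unit by (simp add: inner_combination power2_eq_square)
  show ?thesis
  proof (rule eq_matI)
    fix r s assume "r < dim_row ?Q" "s < dim_col ?Q"
    then have r: "r < n" and s: "s < n"
      by (simp_all add: deflated_proj_def)
    have "(?Q * ?Q) $$ (r, s) = (\<Sum>t<n. (?P r t - ?z r * ?z t) * (?P t s - ?z t * ?z s))"
      using r s by (simp add: deflated_proj_def scalar_prod_def atLeast0LessThan)
    also have "\<dots> = (\<Sum>t<n. ?P r t * ?P s t - ?z s * (?P r t * ?z t) - ?z r * (?P s t * ?z t)
        + ?z r * ?z s * (?z t * ?z t))"
      by (intro sum.cong refl) (simp add: P_sym[of _ s] algebra_simps)
    also have "\<dots> = ?P r s - ?z r * ?z s"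
      by (simp add: sum.distrib sum_subtractf PP Pz zz flip: sum_distrib_left)
    also have "\<dots> = ?Q $$ (r, s)"
      using r s by (simp add: deflated_proj_def)
    finally show "(?Q * ?Q) $$ (r, s) = ?Q $$ (r, s)" .
  qed (simp_all add: deflated_proj_def)
qed

lemma trace_deflated_proj:
  assumes unit: "(\<Sum>j\<in>J. (a j)\<^sup>2) = 1"
  shows "(\<Sum>r<n. deflated_proj a $$ (r, r)) = real (card J) - 1"
proof -
  have "(\<Sum>r<n. combination a r * combination a r) = 1"
    using unit by (simp add: inner_combination power2_eq_square)
  then show ?thesis
    by (simp add: deflated_proj_def combination_def sum_subtractf sum.swap[of _ J] orthonormal)
qed

lemma deflated_proj_in_proj_set:
  assumes unit: "(\<Sum>j\<in>J. (a j)\<^sup>2) = 1"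
  shows "deflated_proj a \<in> proj_set (card J - 1) n"
proof -
  let ?Q = "deflated_proj a"
  have carrier: "?Q \<in> carrier_mat n n"
    by (simp add: deflated_proj_def)
  have sym: "transpose_mat ?Q = ?Q"
    by (auto intro!: eq_matI simp: deflated_proj_def combination_def mult.commute)
  have "J \<noteq> {}"
    using unit by (metis sum.empty zero_neq_one)
  then have "1 \<le> card J"
    using finite_J by (simp add: Suc_le_eq card_gt_0_iff)
  moreover have "trace_mat ?Q = real (card J) - 1"
    using trace_deflated_proj[OF unit] by (simp add: trace_mat_def deflated_proj_def)
  ultimately have "vec_space.rank n ?Q = card J - 1"
    using idempotent_rank_eq_trace[OF carrier deflated_proj_idem[OF unit]] by (simp add: of_nat_diff)
  then show ?thesis
    using carrier sym deflated_proj_idem[OF unit] by (simp add: proj_set_def)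
qed

lemma deflated_proj_inner_eigen:
  assumes eigen: "\<And>j r. j \<in> J \<Longrightarrow> r < n \<Longrightarrow> (\<Sum>t<n. A $$ (r, t) * u j t) = d j * u j r"
  shows "(\<Sum>r<n. \<Sum>t<n. deflated_proj a $$ (r, t) * A $$ (r, t)) = (\<Sum>j\<in>J. (1 - (a j)\<^sup>2) * d j)"
proof -
  have "(\<Sum>t<n. combination x t * A $$ (r, t)) = combination (\<lambda>j. x j * d j) r" if r: "r < n" for x r
  proof -
    have "(\<Sum>t<n. combination x t * A $$ (r, t)) = (\<Sum>j\<in>J. x j * (\<Sum>t<n. A $$ (r, t) * u j t))"
      unfolding combination_def sum_distrib_right sum_distrib_left
      by (subst sum.swap) (simp add: mult_ac)
    then show ?thesis
      using r eigen by (simp add: combination_def mult_ac)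
  qed
  then have "(\<Sum>r<n. \<Sum>t<n. deflated_proj a $$ (r, t) * A $$ (r, t))
      = (\<Sum>r<n. combination (\<lambda>j. u j r * d j) r - combination a r * combination (\<lambda>j. a j * d j) r)"
    by (simp add: deflated_proj_def left_diff_distrib sum_subtractf mult.assoc flip: sum_distrib_left)
  also have "\<dots> = (\<Sum>j\<in>J. d j) - (\<Sum>j\<in>J. a j * (a j * d j))"
  proof -
    have "(\<Sum>r<n. combination (\<lambda>j. u j r * d j) r) = (\<Sum>j\<in>J. d j * (\<Sum>r<n. u j r * u j r))"
      by (simp add: combination_def sum.swap[of _ J] sum_distrib_left mult_ac)
    then show ?thesis
      by (simp only: sum_subtractf inner_combination) (simp add: orthonormal)
  qed
  also have "\<dots> = (\<Sum>j\<in>J. (1 - (a j)\<^sup>2) * d j)"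
    by (simp add: sum_subtractf algebra_simps power2_eq_square)
  finally show ?thesis .
qed

definition ones_coord :: "nat \<Rightarrow> real" where
  "ones_coord j = (\<Sum>r<n. u j r)"

lemma sum_deflated_proj:
  "(\<Sum>r<n. \<Sum>t<n. deflated_proj a $$ (r, t)) =
    (\<Sum>j\<in>J. (ones_coord j)\<^sup>2) - (\<Sum>j\<in>J. a j * ones_coord j)\<^sup>2"
proof -
  have sum_combination: "(\<Sum>r<n. combination x r) = (\<Sum>j\<in>J. x j * ones_coord j)" for x
    by (simp add: combination_def ones_coord_def sum.swap[of _ J] sum_distrib_left)
  have "(\<Sum>r<n. \<Sum>t<n. combination (\<lambda>j. u j r) t) = (\<Sum>r<n. \<Sum>j\<in>J. u j r * ones_coord j)"
    by (simp only: sum_combination)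
  also have "\<dots> = (\<Sum>j\<in>J. (ones_coord j)\<^sup>2)"
    by (simp add: sum.swap[of _ J] power2_eq_square ones_coord_def sum_distrib_right)
  moreover have "(\<Sum>r<n. \<Sum>t<n. combination a r * combination a t) = (\<Sum>j\<in>J. a j * ones_coord j)\<^sup>2"
    by (simp add: sum_product[symmetric] sum_combination power2_eq_square)
  ultimately show ?thesis
    by (simp add: deflated_proj_def sum_subtractf)
qed

text \<open>The coefficients a are those of the normalised projection of the all-ones vector onto the
  span of the family, or of an arbitrary unit vector of the span if that projection vanishes.\<close>
lemma exists_deflated_proj_sum_zero:
  assumes "J \<noteq> {}"
  obtains a where "(\<Sum>j\<in>J. (a j)\<^sup>2) = 1" "(\<Sum>r<n. \<Sum>t<n. deflated_proj a $$ (r, t)) = 0"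
proof (cases "\<forall>j\<in>J. ones_coord j = 0")
  case True
  obtain j0 where j0: "j0 \<in> J"
    using assms by blast
  let ?a = "\<lambda>j. if j = j0 then 1 else 0 :: real"
  have "(\<Sum>j\<in>J. (?a j)\<^sup>2) = (\<Sum>j\<in>J. if j = j0 then 1 else 0)"
    by (intro sum.cong) auto
  then have unit: "(\<Sum>j\<in>J. (?a j)\<^sup>2) = 1"
    using finite_J j0 by simp
  then show thesis
    using that[OF unit] True by (simp add: sum_deflated_proj)
next
  case False
  define \<sigma> where "\<sigma> = (\<Sum>j\<in>J. (ones_coord j)\<^sup>2)"
  obtain j where j: "j \<in> J" "ones_coord j \<noteq> 0"
    using False by blast
  have pos: "\<sigma> > 0"
    unfolding \<sigma>_def using finite_J j by (intro sum_pos2[of J j]) auto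
  have "(\<Sum>j\<in>J. (ones_coord j / sqrt \<sigma>)\<^sup>2) = 1"
    using pos by (simp add: power_divide sum_divide_distrib[symmetric] \<sigma>_def[symmetric])
  moreover have "(\<Sum>j\<in>J. ones_coord j / sqrt \<sigma> * ones_coord j) = \<sigma> / sqrt \<sigma>"
    by (simp add: \<sigma>_def sum_divide_distrib power2_eq_square)
  then have "(\<Sum>j\<in>J. ones_coord j / sqrt \<sigma> * ones_coord j)\<^sup>2 = \<sigma>"
    using pos by (simp add: real_div_sqrt)
  ultimately show thesis
    using that[of "\<lambda>j. ones_coord j / sqrt \<sigma>"] by (simp add: sum_deflated_proj \<sigma>_def)
qed

end

lemma sum_complementary_weights_ge:
  fixes a d :: "nat \<Rightarrow> real"
  assumes "finite J" and unit: "(\<Sum>j\<in>J. (a j)\<^sup>2) = 1" and ge: "\<And>j. j \<in> J \<Longrightarrow> c \<le> d j"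
  shows "c * (real (card J) - 1) \<le> (\<Sum>j\<in>J. (1 - (a j)\<^sup>2) * d j)"
proof -
  have "(a j)\<^sup>2 \<le> 1" if "j \<in> J" for j
    using member_le_sum[of j J "\<lambda>j. (a j)\<^sup>2"] that \<open>finite J\<close> unit by simp
  then have "(\<Sum>j\<in>J. (1 - (a j)\<^sup>2) * c) \<le> (\<Sum>j\<in>J. (1 - (a j)\<^sup>2) * d j)"
    using ge by (intro sum_mono mult_left_mono) auto
  moreover have "(\<Sum>j\<in>J. (1 - (a j)\<^sup>2) * c) = c * (real (card J) - 1)"
    using unit by (simp add: sum_distrib_right[symmetric] sum_subtractf)
  ultimately show ?thesis
    by simp
qed

section \<open>Adjacency eigenvalues\<close>

lemma abs_sum_ge_adjacency_inner:
  fixes Q :: "real mat"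
  assumes G: "simple_graph n E"
  shows "2 * (\<Sum>r<n. \<Sum>t<n. Q $$ (r, t) * adj_mat n E $$ (r, t)) + 2 * (\<Sum>r<n. Q $$ (r, r))
      - (\<Sum>r<n. \<Sum>t<n. Q $$ (r, t)) \<le> (\<Sum>r<n. \<Sum>t<n. \<bar>Q $$ (r, t)\<bar>)"
proof -
  \<comment> \<open>The matrix 2A + 2I - J has all entries \<plusminus>1.\<close>
  define b where "b r t = 2 * adj_mat n E $$ (r, t) + 2 * (if r = t then 1 else 0) - 1" for r t
  have b: "\<bar>b r t\<bar> \<le> 1" if "r < n" "t < n" for r t
    using G that unfolding b_def adj_mat_def simple_graph_def by auto
  have "(\<Sum>t<n. Q $$ (r, t) * b r t) = 2 * (\<Sum>t<n. Q $$ (r, t) * adj_mat n E $$ (r, t))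
      + 2 * Q $$ (r, r) - (\<Sum>t<n. Q $$ (r, t))" if r: "r < n" for r
  proof -
    have "(\<Sum>t<n. Q $$ (r, t) * b r t) = (\<Sum>t<n. 2 * (Q $$ (r, t) * adj_mat n E $$ (r, t))
        + (if t = r then 2 * Q $$ (r, r) else 0) - Q $$ (r, t))"
      by (intro sum.cong refl) (auto simp: b_def algebra_simps)
    then show ?thesis
      using r by (simp add: sum.distrib sum_subtractf sum_distrib_left)
  qed
  then have "2 * (\<Sum>r<n. \<Sum>t<n. Q $$ (r, t) * adj_mat n E $$ (r, t)) + 2 * (\<Sum>r<n. Q $$ (r, r))
      - (\<Sum>r<n. \<Sum>t<n. Q $$ (r, t)) = (\<Sum>r<n. \<Sum>t<n. Q $$ (r, t) * b r t)"
    by (simp add: sum.distrib sum_subtractf sum_distrib_left)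
  also have "\<dots> \<le> (\<Sum>r<n. \<Sum>t<n. \<bar>Q $$ (r, t)\<bar>)"
  proof (intro sum_mono)
    fix r t assume "r \<in> {..<n}" "t \<in> {..<n}"
    then have "\<bar>Q $$ (r, t) * b r t\<bar> \<le> \<bar>Q $$ (r, t)\<bar>"
      using b by (simp add: abs_mult mult_left_le)
    then show "Q $$ (r, t) * b r t \<le> \<bar>Q $$ (r, t)\<bar>"
      by linarith
  qed
  finally show ?thesis .
qed

lemma symmetric_mat_top_eigenfamily:
  fixes A :: "real mat"
  assumes A: "A \<in> carrier_mat n n" and sym: "transpose_mat A = A" and k: "1 \<le> k" "k \<le> n"
  obtains J u d where "orthonormal_family n J u" "card J = k"
    "\<And>j. j \<in> J \<Longrightarrow> eigs_desc A ! (k - 1) \<le> d j"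
    "\<And>j r. j \<in> J \<Longrightarrow> r < n \<Longrightarrow> (\<Sum>t<n. A $$ (r, t) * u j t) = d j * u j r"
proof -
  obtain vs ds where len: "length vs = n" and orth: "orthonormal n vs" and eig: "eigenpairs A vs ds"
    and char: "char_poly A = (\<Prod>d\<leftarrow>ds. [:- d, 1:])"
    using symmetric_mat_spectral[OF A sym] .
  have vs: "vs ! j \<in> carrier_vec n" "A *\<^sub>v vs ! j = ds ! j \<cdot>\<^sub>v vs ! j" if "j < n" for j
    using orth eig len that unfolding orthonormal_def eigenpairs_def by auto
  have "eigs_desc A = rev (sort ds)" and "length ds = n"
    using eigs_desc_eq_rev_sort[OF A char] eig len by (simp_all add: eigenpairs_def)
  then have "k \<le> card {j. j < n \<and> eigs_desc A ! (k - 1) \<le> ds ! j}"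
    using card_ge_kth_largest[of k ds] k by simp
  then obtain J where J: "J \<subseteq> {j. j < n \<and> eigs_desc A ! (k - 1) \<le> ds ! j}" and card_J: "card J = k"
    by (rule obtain_subset_with_card_n)
  have scalar_prod_vs: "vs ! j \<bullet> vs ! l = (\<Sum>r<n. vs ! j $ r * vs ! l $ r)" if "l < n" for j l
    using vs(1)[OF that] by (simp add: scalar_prod_def atLeast0LessThan)
  have "orthonormal_family n J (\<lambda>j r. vs ! j $ r)"
  proof
    show "finite J"
      using J by (simp add: finite_subset)
    show "(\<Sum>r<n. vs ! j $ r * vs ! l $ r) = (if j = l then 1 else 0)" if "j \<in> J" "l \<in> J" for j l
    proof -
      have "j < n" "l < n"
        using that J by auto
      then show ?thesis
        using orth len scalar_prod_vs[of l j] unfolding orthonormal_def by simp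
    qed
  qed
  moreover have "(\<Sum>t<n. A $$ (r, t) * vs ! j $ t) = ds ! j * vs ! j $ r" if "j \<in> J" "r < n" for j r
  proof -
    have "(\<Sum>t<n. A $$ (r, t) * vs ! j $ t) = (A *\<^sub>v vs ! j) $ r"
      using that J A vs(1)[of j] by (auto simp: scalar_prod_def atLeast0LessThan)
    then show ?thesis
      using that J vs[of j] by auto
  qed
  ultimately show thesis
    using that card_J J by blast
qed

lemma graph_eig_le:
  assumes k: "2 \<le> k" "k \<le> n" and G: "simple_graph n E"
  shows "graph_eig k n E \<le> lambda_R (k - 1) / (2 * real (k - 1)) * real n - 1"
proof -
  define A where "A = adj_mat n E"
  define c where "c = graph_eig k n E"
  have A: "A \<in> carrier_mat n n" and sym: "transpose_mat A = A"
    using G by (auto intro!: eq_matI simp: A_def adj_mat_def simple_graph_def)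
  have "1 \<le> k"
    using k by simp
  then obtain J u d where family: "orthonormal_family n J u" and card_J: "card J = k"
    and top: "\<And>j. j \<in> J \<Longrightarrow> c \<le> d j"
    and eigen: "\<And>j r. j \<in> J \<Longrightarrow> r < n \<Longrightarrow> (\<Sum>t<n. A $$ (r, t) * u j t) = d j * u j r"
    using symmetric_mat_top_eigenfamily[OF A sym _ k(2)] unfolding c_def graph_eig_def A_def
    by blast
  interpret orthonormal_family n J u
    by (rule family)
  have "J \<noteq> {}"
    using card_J k by auto
  then obtain a where unit: "(\<Sum>j\<in>J. (a j)\<^sup>2) = 1"
    and sum_zero: "(\<Sum>r<n. \<Sum>t<n. deflated_proj a $$ (r, t)) = 0"
    by (rule exists_deflated_proj_sum_zero)
  let ?Q = "deflated_proj a"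
  have "c * (real k - 1) \<le> (\<Sum>r<n. \<Sum>t<n. ?Q $$ (r, t) * A $$ (r, t))"
    using deflated_proj_inner_eigen[OF eigen] sum_complementary_weights_ge[OF finite_J unit top] card_J
    by simp
  then have "2 * real (k - 1) * (c + 1) \<le> 2 * (\<Sum>r<n. \<Sum>t<n. ?Q $$ (r, t) * A $$ (r, t))
      + 2 * (\<Sum>r<n. ?Q $$ (r, r)) - (\<Sum>r<n. \<Sum>t<n. ?Q $$ (r, t))"
    using trace_deflated_proj[OF unit] sum_zero card_J k by (simp add: of_nat_diff algebra_simps)
  also have "\<dots> \<le> (\<Sum>r<n. \<Sum>t<n. \<bar>?Q $$ (r, t)\<bar>)"
    using abs_sum_ge_adjacency_inner[OF G] by (simp add: A_def)
  also have "\<dots> \<le> real n * lambda_R (k - 1)"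
    using abs_sum_le_lambda_R deflated_proj_in_proj_set[OF unit] card_J k by simp
  finally have "c + 1 \<le> lambda_R (k - 1) / (2 * real (k - 1)) * real n"
    using k by (simp add: field_simps)
  then show ?thesis
    by (simp add: c_def)
qed

lemma finite_graph_eig_values: "finite {graph_eig k n E | E. simple_graph n E}"
proof -
  let ?eig = "\<lambda>S. graph_eig k n (\<lambda>i j. (i, j) \<in> S)"
  have "{graph_eig k n E | E. simple_graph n E} \<subseteq> ?eig ` Pow ({..<n} \<times> {..<n})"
  proof clarify
    fix E
    let ?S = "{(i, j). i < n \<and> j < n \<and> E i j}"
    have "adj_mat n E = adj_mat n (\<lambda>i j. (i, j) \<in> ?S)"
      by (auto intro!: eq_matI simp: adj_mat_def)
    then have "graph_eig k n E = ?eig ?S"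
      by (simp add: graph_eig_def)
    then show "graph_eig k n E \<in> ?eig ` Pow ({..<n} \<times> {..<n})"
      by blast
  qed
  then show ?thesis
    by (rule finite_subset) simp
qed

lemma M_k_le:
  assumes "2 \<le> k" "k \<le> n"
  shows "M_k k n \<le> lambda_R (k - 1) / (2 * real (k - 1)) * real n - 1"
proof -
  have "simple_graph n (\<lambda>_ _. False)"
    by (simp add: simple_graph_def)
  then have "M_k k n \<in> {graph_eig k n E | E. simple_graph n E}"
    unfolding M_k_def by (intro Max_in finite_graph_eig_values) blast
  then obtain E where "simple_graph n E" "M_k k n = graph_eig k n E"
    by blast
  then show ?thesis
    using graph_eig_le[OF assms] by simp
qed

theorem corollary2p2:
  shows "(\<forall>k n E. 2 \<le> k \<longrightarrow> k \<le> n \<longrightarrow> simple_graph n E \<longrightarrow>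
            graph_eig k n E \<le> lambda_R (k - 1) / (2 * real (k - 1)) * real n - 1)
       \<and> (\<forall>k. 2 \<le> k \<longrightarrow> c_k k \<le> lambda_R (k - 1) / (2 * real (k - 1)))"
proof (intro conjI allI impI)
  fix k n E
  assume "2 \<le> k" "k \<le> n" "simple_graph n E"
  then show "graph_eig k n E \<le> lambda_R (k - 1) / (2 * real (k - 1)) * real n - 1"
    by (rule graph_eig_le)
next
  fix k :: nat
  assume k: "2 \<le> k"
  show "c_k k \<le> lambda_R (k - 1) / (2 * real (k - 1))"
    unfolding c_k_def
  proof (rule cSUP_least)
    fix n assume "n \<in> {k..}"
    then have "M_k k n \<le> lambda_R (k - 1) / (2 * real (k - 1)) * real n" and "real n > 0"
      using M_k_le[OF k] k by force+
    then show "M_k k n / real n \<le> lambda_R (k - 1) / (2 * real (k - 1))"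
      by (simp add: divide_le_eq)
  qed simp
qed

end
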